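(* Let $\psi_n,\psi^*_n$ ($n\in\mathbb{Z}$) satisfy the canonical anticommutation relations $[\psi^*_m,\psi^*_n]_+=[\psi_m,\psi_n]_+=0$, $[\psi^*_m,\psi_n]_+=\delta_{mn}$. Let $\gamma_n\ge0$ ($n\in\mathbb{Z}$) with only finitely many nonzero and $S_n=\sinh\gamma_n<1$, $C_n=\cosh\gamma_n$. Define $H_{mn}=\psi_n\psi^*_m+(-1)^{m-n+1}\psi_m\psi^*_n$ for $m>n$, $$\mathcal H=\sum_{m>n}(-1)^{m-n}C_mS_{m-1}\cdots S_{n+1}C_nH_{mn},$$ $$\phi(\theta)=\sum_nC_ne^{in\theta}\prod_{j\le n-1}(1+S_je^{-i\theta})\prod_{j\ge n+1}(1-S_je^{i\theta})\,\psi_n,\qquad \phi^*(\theta)=\sum_nC_ne^{-in\theta}\prod_{j\le n-1}(1-S_je^{i\theta})\prod_{j\ge n+1}(1+S_je^{-i\theta})\,\psi^*_n .$$ Then $$[\mathcal H,\phi(\theta)]=-(e^{i\theta}+e^{-i\theta})\phi(\theta),\qquad[\mathcal H,\phi^*(\theta)]=(e^{i\theta}+e^{-i\theta})\phi^*(\theta),$$ $$[\phi^*(\theta_1),\phi(\theta_2)]_+=\prod_j(1+S_je^{-i\theta_1})(1-S_je^{i\theta_1})\sum_{k\in\mathbb Z}e^{ik(\theta_1-\theta_2)}.$$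
   Context: The infinite sums are formal linear combinations of the $\psi_n,\psi^*_n$ (respectively of bilinears), and commutators and anticommutators are computed termwise using the anticommutation relations; the last identity is an identity of formal Fourier series in $\theta_1,\theta_2$. Products over $j$ are finite since $S_j=0$ for all but finitely many $j$. *)

theory Defs
  imports "HOL-Analysis.Analysis" "HOL-Library.Groups_Big_Fun"
begin

datatype gen = Psi int | PsiS int

text \<open>A formal (possibly infinite) linear combination of the generators,
  given by its coefficient function: X stands for the sum over g of X g times g.\<close>
type_synonym fsum = "gen \<Rightarrow> complex"

definition unit_fs :: "gen \<Rightarrow> fsum" where
  "unit_fs g = (\<lambda>h. if h = g then 1 else 0)"

text \<open>Canonical anticommutation relations: the anticommutator of two generators
  is the given scalar multiple of the identity.\<close>
fun acomm_gen :: "gen \<Rightarrow> gen \<Rightarrow> complex" where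
  "acomm_gen (PsiS m) (Psi n) = (if m = n then 1 else 0)"
| "acomm_gen (Psi n) (PsiS m) = (if m = n then 1 else 0)"
| "acomm_gen (Psi m) (Psi n) = 0"
| "acomm_gen (PsiS m) (PsiS n) = 0"

text \<open>Commutator of a bilinear g1 g2 with a generator h, computed with the CAR via
  the identity [g1 g2, h] = g1 [g2,h]_+ - [g1,h]_+ g2.\<close>
definition comm_quad_gen :: "gen \<Rightarrow> gen \<Rightarrow> gen \<Rightarrow> fsum" where
  "comm_quad_gen g1 g2 h =
     (\<lambda>x. acomm_gen g2 h * unit_fs g1 x - acomm_gen g1 h * unit_fs g2 x)"

definition comm_Hmn_gen :: "int \<Rightarrow> int \<Rightarrow> gen \<Rightarrow> fsum" where
  "comm_Hmn_gen m n h =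
     (\<lambda>x. comm_quad_gen (Psi n) (PsiS m) h x
          + (-1::complex) ^ nat (m - n + 1) * comm_quad_gen (Psi m) (PsiS n) h x)"

text \<open>Term of the termwise commutator [sum_{m>n} c m n H_mn, sum_h X h h],
  contributing to the coefficient of the generator g.\<close>
definition comm_H_term :: "(int \<Rightarrow> int \<Rightarrow> complex) \<Rightarrow> fsum \<Rightarrow> gen \<Rightarrow> (int \<times> int) \<times> gen \<Rightarrow> complex" where
  "comm_H_term c X g = (\<lambda>((m, n), h). if n < m then c m n * X h * comm_Hmn_gen m n h g else 0)"

definition comm_H_welldef :: "(int \<Rightarrow> int \<Rightarrow> complex) \<Rightarrow> fsum \<Rightarrow> bool" where
  "comm_H_welldef c X \<longleftrightarrow> (\<forall>g. finite {t. comm_H_term c X g t \<noteq> 0})"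

definition comm_H :: "(int \<Rightarrow> int \<Rightarrow> complex) \<Rightarrow> fsum \<Rightarrow> fsum" where
  "comm_H c X = (\<lambda>g. Sum_any (comm_H_term c X g))"

definition acomm_term :: "fsum \<Rightarrow> fsum \<Rightarrow> gen \<times> gen \<Rightarrow> complex" where
  "acomm_term X Y = (\<lambda>(g, h). X g * Y h * acomm_gen g h)"

definition acomm_welldef :: "fsum \<Rightarrow> fsum \<Rightarrow> bool" where
  "acomm_welldef X Y \<longleftrightarrow> finite {t. acomm_term X Y t \<noteq> 0}"

definition acomm_fs :: "fsum \<Rightarrow> fsum \<Rightarrow> complex" where
  "acomm_fs X Y = Sum_any (acomm_term X Y)"

definition fourier_coeff :: "(real \<Rightarrow> complex) \<Rightarrow> int \<Rightarrow> complex" where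
  "fourier_coeff f q =
     integral {0..2*pi} (\<lambda>t. f t * cis (- (of_int q * t))) / complex_of_real (2*pi)"

text \<open>Coefficient of H_mn in the Hamiltonian (used for m > n), with S_j = sinh(gamma j),
  C_j = cosh(gamma j).\<close>
definition Hcoef :: "(int \<Rightarrow> real) \<Rightarrow> int \<Rightarrow> int \<Rightarrow> complex" where
  "Hcoef \<gamma> m n = (-1::complex) ^ nat (m - n) *
     complex_of_real (cosh (\<gamma> m) * (\<Prod>j\<in>{n<..<m}. sinh (\<gamma> j)) * cosh (\<gamma> n))"

definition phi :: "(int \<Rightarrow> real) \<Rightarrow> real \<Rightarrow> fsum" where
  "phi \<gamma> \<theta> = (\<lambda>g. case g of
      Psi n \<Rightarrow> complex_of_real (cosh (\<gamma> n)) * cis (of_int n * \<theta>)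
        * Prod_any (\<lambda>j. if j \<le> n - 1 then 1 + complex_of_real (sinh (\<gamma> j)) * cis (- \<theta>) else 1)
        * Prod_any (\<lambda>j. if j \<ge> n + 1 then 1 - complex_of_real (sinh (\<gamma> j)) * cis \<theta> else 1)
    | PsiS n \<Rightarrow> 0)"

definition phis :: "(int \<Rightarrow> real) \<Rightarrow> real \<Rightarrow> fsum" where
  "phis \<gamma> \<theta> = (\<lambda>g. case g of
      Psi n \<Rightarrow> 0
    | PsiS n \<Rightarrow> complex_of_real (cosh (\<gamma> n)) * cis (- (of_int n * \<theta>))
        * Prod_any (\<lambda>j. if j \<le> n - 1 then 1 - complex_of_real (sinh (\<gamma> j)) * cis \<theta> else 1)
        * Prod_any (\<lambda>j. if j \<ge> n + 1 then 1 + complex_of_real (sinh (\<gamma> j)) * cis (- \<theta>) else 1))"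

end

(*
  The mode functions are products over the lattice of one-site factors
  1 + s_j e^{-i theta} (for j < n) and 1 - s_j e^{i theta} (for j > n), so neighbouring modes
  differ in a single factor. Together with c_j^2 = 1 + s_j^2 this turns each of the two sums
  making up the commutator of the hopping Hamiltonian with a mode into a telescoping sum, whose
  boundary terms add up to -(e^{i theta} + e^{-i theta}) times the mode.

  For the anticommutator, (1 - e^{i(t - theta)}) phi^*_n(theta) phi_n(t) is a difference of two
  consecutive products whose factors switch from one pair of one-site factors to another at n, so
  the sum over n telescopes. Dividing by 1 - e^{i(t - theta)} coefficientwise, the q-th Fourier
  coefficient in t is e^{-i q theta} times that product at t = theta, where both pairs agree and it
  becomes the full product over j.
*)
theory Submission
  imports Defs
begin

section \<open>Trigonometric polynomials and their Fourier coefficients\<close>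

definition trig_poly :: "(real \<Rightarrow> complex) \<Rightarrow> int \<Rightarrow> int \<Rightarrow> bool" where
  "trig_poly f lo hi \<longleftrightarrow> (\<exists>b. \<forall>t. f t = (\<Sum>k\<in>{lo..hi}. b k * cis (of_int k * t)))"

lemma trig_polyE:
  assumes "trig_poly f lo hi"
  obtains b where "\<And>t. f t = (\<Sum>k\<in>{lo..hi}. b k * cis (of_int k * t))"
  using assms unfolding trig_poly_def by blast

lemma trig_poly_mono:
  assumes "trig_poly f lo hi" "lo' \<le> lo" "hi \<le> hi'"
  shows "trig_poly f lo' hi'"
proof -
  obtain b where b: "\<And>t. f t = (\<Sum>k\<in>{lo..hi}. b k * cis (of_int k * t))"
    using trig_polyE[OF assms(1)] by blast
  define b' where "b' k = (if k \<in> {lo..hi} then b k else 0)" for k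
  have "f t = (\<Sum>k\<in>{lo'..hi'}. b' k * cis (of_int k * t))" for t
    unfolding b by (rule sum.mono_neutral_cong_left) (use assms in \<open>auto simp: b'_def\<close>)
  then show ?thesis unfolding trig_poly_def by (intro exI[of _ b']) blast
qed

lemma trig_poly_cis: "trig_poly (\<lambda>t. c * cis (of_int k * t)) k k"
  unfolding trig_poly_def by (rule exI[of _ "\<lambda>_. c"]) simp

lemma trig_poly_const: "trig_poly (\<lambda>t. c) 0 0"
  using trig_poly_cis[of c 0] by simp

lemma trig_poly_zero: "trig_poly (\<lambda>t. 0) lo hi"
  unfolding trig_poly_def by (rule exI[of _ "\<lambda>_. 0"]) simp

lemma trig_poly_add:
  assumes "trig_poly f lo hi" "trig_poly g lo hi"
  shows "trig_poly (\<lambda>t. f t + g t) lo hi"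
proof -
  obtain b where b: "\<And>t. f t = (\<Sum>k\<in>{lo..hi}. b k * cis (of_int k * t))"
    using trig_polyE[OF assms(1)] by blast
  obtain c where c: "\<And>t. g t = (\<Sum>k\<in>{lo..hi}. c k * cis (of_int k * t))"
    using trig_polyE[OF assms(2)] by blast
  have "f t + g t = (\<Sum>k\<in>{lo..hi}. (b k + c k) * cis (of_int k * t))" for t
    unfolding b c by (simp add: sum.distrib distrib_right)
  then show ?thesis unfolding trig_poly_def by (intro exI[of _ "\<lambda>k. b k + c k"]) blast
qed

lemma trig_poly_cmult:
  assumes "trig_poly f lo hi"
  shows "trig_poly (\<lambda>t. c * f t) lo hi"
proof -
  obtain b where b: "\<And>t. f t = (\<Sum>k\<in>{lo..hi}. b k * cis (of_int k * t))"
    using trig_polyE[OF assms] by blast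
  have "c * f t = (\<Sum>k\<in>{lo..hi}. (c * b k) * cis (of_int k * t))" for t
    unfolding b by (simp add: sum_distrib_left mult.assoc)
  then show ?thesis unfolding trig_poly_def by (intro exI[of _ "\<lambda>k. c * b k"]) blast
qed

lemma trig_poly_sum:
  assumes "finite I" "\<And>i. i \<in> I \<Longrightarrow> trig_poly (f i) lo hi"
  shows "trig_poly (\<lambda>t. \<Sum>i\<in>I. f i t) lo hi"
  using assms by (induction I rule: finite_induct) (auto intro: trig_poly_zero trig_poly_add)

lemma trig_poly_mult_cis:
  assumes "trig_poly f lo hi"
  shows "trig_poly (\<lambda>t. f t * cis (of_int m * t)) (lo + m) (hi + m)"
proof -
  obtain b where b: "\<And>t. f t = (\<Sum>k\<in>{lo..hi}. b k * cis (of_int k * t))"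
    using trig_polyE[OF assms] by blast
  have "f t * cis (of_int m * t) = (\<Sum>k\<in>{lo+m..hi+m}. b (k - m) * cis (of_int k * t))" for t
    unfolding b sum_distrib_right
    by (rule sum.reindex_bij_witness[of _ "\<lambda>k. k - m" "\<lambda>k. k + m"])
       (auto simp: mult.assoc cis_mult algebra_simps)
  then show ?thesis unfolding trig_poly_def by (intro exI[of _ "\<lambda>k. b (k - m)"]) blast
qed

lemma trig_poly_mult:
  assumes "trig_poly f lo hi" "trig_poly g lo' hi'"
  shows "trig_poly (\<lambda>t. f t * g t) (lo + lo') (hi + hi')"
proof -
  obtain c where c: "\<And>t. g t = (\<Sum>k\<in>{lo'..hi'}. c k * cis (of_int k * t))"
    using trig_polyE[OF assms(2)] by blast
  have "(\<lambda>t. f t * g t) = (\<lambda>t. \<Sum>k\<in>{lo'..hi'}. c k * (f t * cis (of_int k * t)))"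
    unfolding c by (simp add: sum_distrib_left mult_ac)
  then show ?thesis
    by (simp only:) (auto intro!: trig_poly_sum trig_poly_cmult
        trig_poly_mono[OF trig_poly_mult_cis[OF assms(1)]])
qed

lemma trig_poly_prod:
  assumes "finite D" "\<And>j. j \<in> D \<Longrightarrow> trig_poly (f j) (-1) 1"
  shows "trig_poly (\<lambda>t. \<Prod>j\<in>D. f j t) (- int (card D)) (int (card D))"
  using assms
proof (induction D rule: finite_induct)
  case empty
  then show ?case using trig_poly_const[of 1] by simp
next
  case (insert x F)
  then have "trig_poly (\<lambda>t. f x t * (\<Prod>j\<in>F. f j t)) (-1 + - int (card F)) (1 + int (card F))"
    by (intro trig_poly_mult) auto
  with insert show ?case by simp
qed

lemma trig_poly_Prod_any:
  assumes "finite D" "\<And>j t. j \<notin> D \<Longrightarrow> f j t = 1" "\<And>j. trig_poly (f j) (-1) 1"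
  shows "trig_poly (\<lambda>t. Prod_any (\<lambda>j. f j t)) (- int (card D)) (int (card D))"
proof -
  have "Prod_any (\<lambda>j. f j t) = (\<Prod>j\<in>D. f j t)" for t
    by (rule Prod_any.expand_superset) (use assms in auto)
  then show ?thesis using trig_poly_prod[of D f] assms by simp
qed

lemma trig_poly_linear: "trig_poly (\<lambda>t. a + b * cis (of_int k * t)) (-1) 1" if "\<bar>k\<bar> \<le> 1"
  using that
  by (intro trig_poly_add trig_poly_mono[OF trig_poly_const] trig_poly_mono[OF trig_poly_cis]) auto

lemma trig_poly_if:
  "trig_poly f lo hi \<Longrightarrow> trig_poly g lo hi \<Longrightarrow> trig_poly (\<lambda>t. if P then f t else g t) lo hi"
  by (cases P) simp_all

lemma trig_poly_cis_affine:
  "trig_poly (\<lambda>t. a - b * cis t) (-1) 1" "trig_poly (\<lambda>t. a + b * cis (- t)) (-1) 1"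
  using trig_poly_linear[of 1 a "- b"] trig_poly_linear[of "-1" a b] by simp_all

lemma trig_poly_continuous_on:
  assumes "trig_poly f lo hi"
  shows "continuous_on S f"
proof -
  obtain b where "\<And>t. f t = (\<Sum>k\<in>{lo..hi}. b k * cis (of_int k * t))"
    using trig_polyE[OF assms] by blast
  then have "f = (\<lambda>t. \<Sum>k\<in>{lo..hi}. b k * cis (of_int k * t))" by blast
  then show ?thesis by (simp add: continuous_on_cis continuous_intros)
qed

lemma integral_cis_int:
  "integral {0..2*pi} (\<lambda>t. cis (of_int k * t)) = (if k = 0 then complex_of_real (2*pi) else 0)"
proof (cases "k = 0")
  case True
  then show ?thesis by (simp add: scaleR_conv_of_real)
next
  case False
  define a where "a = \<i> * of_int k"
  have "a \<noteq> 0" using False by (simp add: a_def)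
  then have "((\<lambda>x. exp (a * x) / a) has_vector_derivative exp (a * t)) (at t within {0..2*pi})" for t
    by (intro derivative_eq_intros has_complex_derivative_imp_has_vector_derivative[unfolded o_def] | simp)+
  then have "((\<lambda>t. exp (a * of_real t)) has_integral
      exp (a * complex_of_real (2*pi)) / a - exp (a * of_real 0) / a) {0..2*pi}"
    by (intro fundamental_theorem_of_calculus) auto
  moreover have "exp (a * complex_of_real (2*pi)) = cis (2 * pi * of_int k)"
    by (simp add: a_def cis_conv_exp algebra_simps)
  moreover have "cis (2 * pi * of_int k) = 1"
    by simp
  moreover have "(\<lambda>t. exp (a * of_real t)) = (\<lambda>t. cis (of_int k * t))"
    by (simp add: a_def cis_conv_exp algebra_simps)
  ultimately show ?thesis using False by (simp add: integral_unique)
qed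

lemma fourier_coeff_trig_poly:
  assumes "\<And>t. f t = (\<Sum>k\<in>{lo..hi}. b k * cis (of_int k * t))"
  shows "fourier_coeff f q = (if q \<in> {lo..hi} then b q else 0)"
proof -
  have cis_shift: "cis (of_int k * t) * cis (- (of_int q * t)) = cis (of_int (k - q) * t)" for k t
    by (simp add: cis_mult algebra_simps)
  have "(\<lambda>t. f t * cis (- (of_int q * t))) = (\<lambda>t. \<Sum>k\<in>{lo..hi}. b k * cis (of_int (k - q) * t))"
    unfolding assms by (simp add: sum_distrib_right mult.assoc cis_shift)
  then have "integral {0..2*pi} (\<lambda>t. f t * cis (- (of_int q * t)))
      = (\<Sum>k\<in>{lo..hi}. b k * integral {0..2*pi} (\<lambda>t. cis (of_int (k - q) * t)))"
    by (simp add: integral_sum integrable_continuous_interval continuous_on_cis continuous_intros)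
  also have "\<dots> = (\<Sum>k\<in>{lo..hi}. if k = q then b k * complex_of_real (2*pi) else 0)"
    by (rule sum.cong) (simp_all only: integral_cis_int, simp)
  also have "\<dots> = (if q \<in> {lo..hi} then b q * complex_of_real (2*pi) else 0)"
    by (simp add: sum.delta')
  finally show ?thesis unfolding fourier_coeff_def by auto
qed

lemma fourier_coeff_eq_0:
  assumes "trig_poly f lo hi" "q \<notin> {lo..hi}"
  shows "fourier_coeff f q = 0"
  using trig_polyE[OF assms(1)] fourier_coeff_trig_poly assms(2) by metis

lemma trig_poly_fourier_expansion:
  assumes "trig_poly f lo hi"
  shows "f t = (\<Sum>k\<in>{lo..hi}. fourier_coeff f k * cis (of_int k * t))"
proof -
  obtain b where b: "\<And>t. f t = (\<Sum>k\<in>{lo..hi}. b k * cis (of_int k * t))"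
    using trig_polyE[OF assms] by blast
  show ?thesis unfolding b[of t] by (rule sum.cong) (auto simp: fourier_coeff_trig_poly[OF b])
qed

lemma integrable_fourier_integrand:
  assumes "continuous_on {0..2*pi} f"
  shows "(\<lambda>t. f t * cis (- (of_int q * t))) integrable_on {0..2*pi}"
  by (intro integrable_continuous_interval continuous_intros continuous_on_cis assms)

lemma fourier_coeff_add:
  assumes "continuous_on {0..2*pi} f" "continuous_on {0..2*pi} g"
  shows "fourier_coeff (\<lambda>t. f t + g t) q = fourier_coeff f q + fourier_coeff g q"
  unfolding fourier_coeff_def
  by (simp add: distrib_right integral_add integrable_fourier_integrand assms add_divide_distrib)

lemma fourier_coeff_cmult: "fourier_coeff (\<lambda>t. c * f t) q = c * fourier_coeff f q"
  unfolding fourier_coeff_def by (simp add: mult.assoc)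

lemma fourier_coeff_diff:
  assumes "continuous_on {0..2*pi} f" "continuous_on {0..2*pi} g"
  shows "fourier_coeff (\<lambda>t. f t - g t) q = fourier_coeff f q - fourier_coeff g q"
  using fourier_coeff_add[OF assms(1) continuous_on_minus[OF assms(2)], of q]
    fourier_coeff_cmult[of "-1" g q] by simp

lemma fourier_coeff_sum:
  assumes "finite I" "\<And>i. i \<in> I \<Longrightarrow> continuous_on {0..2*pi} (f i)"
  shows "fourier_coeff (\<lambda>t. \<Sum>i\<in>I. f i t) q = (\<Sum>i\<in>I. fourier_coeff (f i) q)"
  using assms
proof (induction I rule: finite_induct)
  case empty
  then show ?case by (simp add: fourier_coeff_def)
next
  case (insert x F)
  then show ?case by (simp add: fourier_coeff_add continuous_on_sum)
qed

lemma fourier_coeff_cis_mult: "fourier_coeff (\<lambda>t. cis t * f t) q = fourier_coeff f (q - 1)"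
  unfolding fourier_coeff_def
  by (rule arg_cong2[where f="(/)"], rule arg_cong[where f="integral _"])
     (auto simp: mult_ac cis_mult algebra_simps)

lemma first_order_recurrence_solution:
  fixes b r :: "int \<Rightarrow> 'a::comm_ring_1"
  assumes rec: "\<And>k. lo \<le> k \<Longrightarrow> b k = w * b (k - 1) + r k"
    and start: "b (lo - 1) = 0" and "lo - 1 \<le> q"
  shows "b q = (\<Sum>k\<in>{lo..q}. w ^ nat (q - k) * r k)"
  using assms(3)
proof (induction q rule: int_ge_induct)
  case base
  then show ?case using start by simp
next
  case (step q)
  have "w * w ^ nat (q - k) = w ^ nat (q + 1 - k)" if "k \<le> q" for k
  proof -
    have "nat (q + 1 - k) = Suc (nat (q - k))" using that by simp
    then show ?thesis by simp
  qed
  then have "w * (\<Sum>k\<in>{lo..q}. w ^ nat (q - k) * r k) = (\<Sum>k\<in>{lo..q}. w ^ nat (q + 1 - k) * r k)"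
    by (auto simp: sum_distrib_left mult.assoc[symmetric] intro!: sum.cong)
  moreover have "{lo..q+1} = insert (q+1) {lo..q}" using step by auto
  ultimately show ?case using step rec[of "q + 1"] by simp
qed

text \<open>The coefficientwise form of expanding \<open>1 / (1 - e^{i(t - \<theta>)})\<close> as a geometric series.\<close>

lemma fourier_coeff_resolvent:
  assumes tele: "\<And>t. (1 - cis t * cis (- \<theta>)) * F t = Y t - Y' t"
    and F: "trig_poly F lo hi" and Y: "trig_poly Y lo q" and Y': "trig_poly Y' (q + 1) hi'"
    and "lo \<le> q + 1"
  shows "fourier_coeff F q = cis (- (of_int q * \<theta>)) * Y \<theta>"
proof -
  have cont: "continuous_on {0..2*pi} F" "continuous_on {0..2*pi} Y" "continuous_on {0..2*pi} Y'"
    using F Y Y' by (auto intro: trig_poly_continuous_on)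
  have F_eq: "F = (\<lambda>t. cis (- \<theta>) * (cis t * F t) + (Y t - Y' t))"
  proof
    fix t
    have "F t = cis (- \<theta>) * (cis t * F t) + (1 - cis t * cis (- \<theta>)) * F t"
      by algebra
    then show "F t = cis (- \<theta>) * (cis t * F t) + (Y t - Y' t)"
      by (simp only: tele)
  qed
  have rec: "fourier_coeff F k
      = cis (- \<theta>) * fourier_coeff F (k - 1) + (fourier_coeff Y k - fourier_coeff Y' k)" for k
  proof -
    have "continuous_on {0..2*pi} (\<lambda>t. cis (- \<theta>) * (cis t * F t))"
      by (intro continuous_intros continuous_on_cis cont)
    then have "fourier_coeff F k
        = fourier_coeff (\<lambda>t. cis (- \<theta>) * (cis t * F t)) k + fourier_coeff (\<lambda>t. Y t - Y' t) k"
      by (subst F_eq, intro fourier_coeff_add) (intro continuous_intros cont)+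
    then show ?thesis
      by (simp only: fourier_coeff_cmult fourier_coeff_cis_mult fourier_coeff_diff[OF cont(2,3)])
  qed
  have "fourier_coeff F q
      = (\<Sum>k\<in>{lo..q}. cis (- \<theta>) ^ nat (q - k) * (fourier_coeff Y k - fourier_coeff Y' k))"
    using fourier_coeff_eq_0[OF F, of "lo - 1"] assms(5)
    by (intro first_order_recurrence_solution[where b = "fourier_coeff F"] rec) auto
  also have "\<dots>
      = (\<Sum>k\<in>{lo..q}. cis (- (of_int q * \<theta>)) * (fourier_coeff Y k * cis (of_int k * \<theta>)))"
  proof (rule sum.cong)
    fix k assume k: "k \<in> {lo..q}"
    then have "fourier_coeff Y' k = 0"
      by (intro fourier_coeff_eq_0[OF Y']) auto
    moreover have "cis (- \<theta>) ^ nat (q - k) = cis (- (of_int q * \<theta>)) * cis (of_int k * \<theta>)"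
    proof -
      have "real (nat (q - k)) = of_int q - of_int k" using k by simp
      then show ?thesis by (simp only: Complex.DeMoivre cis_mult) (simp add: algebra_simps)
    qed
    ultimately show "cis (- \<theta>) ^ nat (q - k) * (fourier_coeff Y k - fourier_coeff Y' k)
        = cis (- (of_int q * \<theta>)) * (fourier_coeff Y k * cis (of_int k * \<theta>))"
      by simp
  qed simp
  also have "\<dots> = cis (- (of_int q * \<theta>)) * Y \<theta>"
    by (simp only: sum_distrib_left[symmetric] trig_poly_fourier_expansion[OF Y, symmetric])
  finally show ?thesis .
qed

section \<open>Sums and products over the integers\<close>

lemma sum_int_telescope:
  fixes f :: "int \<Rightarrow> 'a::ab_group_add"
  assumes "lo \<le> hi + 1"
  shows "(\<Sum>k\<in>{lo..hi}. f k - f (k - 1)) = f hi - f (lo - 1)"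
proof -
  have "lo - 1 \<le> hi" using assms by simp
  then show ?thesis
  proof (induction hi rule: int_ge_induct)
    case base
    then show ?case by simp
  next
    case (step i)
    then have "{lo..i+1} = insert (i+1) {lo..i}" by auto
    with step show ?case by simp
  qed
qed

lemma Sum_any_eq_sum_image:
  assumes "finite A" "inj_on g A" "\<And>t. h t \<noteq> 0 \<Longrightarrow> t \<in> g ` A"
  shows "Sum_any h = (\<Sum>x\<in>A. h (g x))"
proof -
  have "Sum_any h = sum h (g ` A)"
    by (rule Sum_any.expand_superset) (use assms in auto)
  also have "\<dots> = (\<Sum>x\<in>A. h (g x))"
    using sum.reindex[OF assms(2)] by simp
  finally show ?thesis .
qed

definition switch_prod :: "(int \<Rightarrow> 'a::comm_monoid_mult) \<Rightarrow> (int \<Rightarrow> 'a) \<Rightarrow> int \<Rightarrow> 'a" where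
  "switch_prod u v n = Prod_any (\<lambda>j. if j < n then u j else v j)"

definition gap_prod :: "(int \<Rightarrow> 'a::comm_monoid_mult) \<Rightarrow> (int \<Rightarrow> 'a) \<Rightarrow> int \<Rightarrow> 'a" where
  "gap_prod u v n = Prod_any (\<lambda>j. if j < n then u j else if n < j then v j else 1)"

lemma Prod_any_extract:
  assumes "finite {j. f j \<noteq> 1}"
  shows "Prod_any f = f n * Prod_any (f(n := 1))"
proof -
  have "finite {j. (f(n := 1)) j \<noteq> 1}"
    by (rule finite_subset[OF _ assms]) auto
  then have "Prod_any ((f(n := 1))(n := f n)) = f n * Prod_any (f(n := 1))"
    by (rule Prod_any.update) simp
  then show ?thesis by simp
qed

context
  fixes u v :: "int \<Rightarrow> 'a::comm_monoid_mult"
  assumes finite_u: "finite {j. u j \<noteq> 1}" and finite_v: "finite {j. v j \<noteq> 1}"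
begin

lemma finite_switch_factors: "finite {j. (if j < n then u j else v j) \<noteq> 1}"
  by (rule finite_subset[OF _ finite_UnI[OF finite_u finite_v]]) auto

lemma switch_prod_eq_gap_prod: "switch_prod u v n = v n * gap_prod u v n"
proof -
  have "(\<lambda>j. if j < n then u j else v j)(n := 1) = (\<lambda>j. if j < n then u j else if n < j then v j else 1)"
    by auto
  then show ?thesis
    unfolding switch_prod_def gap_prod_def
    by (subst Prod_any_extract[OF finite_switch_factors, of n n]) simp
qed

lemma switch_prod_succ_eq_gap_prod: "switch_prod u v (n + 1) = u n * gap_prod u v n"
proof -
  have "(\<lambda>j. if j < n + 1 then u j else v j)(n := 1) = (\<lambda>j. if j < n then u j else if n < j then v j else 1)"
    by auto
  then show ?thesis
    unfolding switch_prod_def gap_prod_def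
    by (subst Prod_any_extract[OF finite_switch_factors, of "n + 1" n]) simp
qed

lemma gap_prod_split:
  "Prod_any (\<lambda>j. if j < n then u j else 1) * Prod_any (\<lambda>j. if n < j then v j else 1) = gap_prod u v n"
proof -
  have "Prod_any (\<lambda>j. if j < n then u j else 1) * Prod_any (\<lambda>j. if n < j then v j else 1)
      = Prod_any (\<lambda>j. (if j < n then u j else 1) * (if n < j then v j else 1))"
    by (rule Prod_any.distrib[symmetric];
        rule finite_subset[OF _ finite_u] finite_subset[OF _ finite_v]) auto
  also have "\<dots> = gap_prod u v n"
    unfolding gap_prod_def by (rule Prod_any.cong) auto
  finally show ?thesis .
qed

end

lemma gap_prod_mult:
  fixes u v u' v' :: "int \<Rightarrow> 'a::comm_monoid_mult"
  assumes "finite {j. u j \<noteq> 1}" "finite {j. v j \<noteq> 1}" "finite {j. u' j \<noteq> 1}" "finite {j. v' j \<noteq> 1}"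
  shows "gap_prod u v n * gap_prod u' v' n = gap_prod (\<lambda>j. u j * u' j) (\<lambda>j. v j * v' j) n"
proof -
  have "finite {j. (if j < n then u j else if n < j then v j else 1) \<noteq> 1}"
    "finite {j. (if j < n then u' j else if n < j then v' j else 1) \<noteq> 1}"
    by (rule finite_subset[OF _ finite_UnI[OF assms(1,2)]]
        finite_subset[OF _ finite_UnI[OF assms(3,4)]]; auto)+
  then show ?thesis
    unfolding gap_prod_def by (subst Prod_any.distrib[symmetric]) (auto intro: Prod_any.cong)
qed

section \<open>Modes of the hopping Hamiltonian\<close>

definition hopping :: "(int \<Rightarrow> complex) \<Rightarrow> (int \<Rightarrow> complex) \<Rightarrow> int \<Rightarrow> int \<Rightarrow> complex" where
  "hopping s c m n = (-1) ^ nat (m - n) * c m * (\<Prod>j\<in>{n<..<m}. s j) * c n"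

lemma hopping_eq_0:
  assumes "n < j" "j < m" "s j = 0"
  shows "hopping s c m n = 0"
  unfolding hopping_def using assms by (subst prod_zero[of "{n<..<m}"]) auto

text \<open>With \<open>z = e^{i\<theta>}\<close>, \<open>\<sigma> = 1\<close> and \<open>e n = z^n\<close>, \<open>c n * mode n\<close> is the coefficient of \<open>\<psi>\<^sub>n\<close> in
  \<open>\<phi>(\<theta>)\<close>; with \<open>z = e^{-i\<theta>}\<close> and \<open>\<sigma> = -1\<close> it is the coefficient of \<open>\<psi>\<^sup>*\<^sub>n\<close> in \<open>\<phi>\<^sup>*(\<theta>)\<close>.\<close>

locale mode_family =
  fixes s c e :: "int \<Rightarrow> complex" and z zi \<sigma> :: complex
  assumes finite_s: "finite {j. s j \<noteq> 0}"
    and cosh_sinh: "\<And>j. c j ^ 2 = 1 + s j ^ 2"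
    and z_zi: "z * zi = 1"
    and e_succ: "\<And>n. e (n + 1) = z * e n"
    and sign: "\<sigma> * \<sigma> = 1"
begin

definition mode :: "int \<Rightarrow> complex" where
  "mode n = e n * gap_prod (\<lambda>j. 1 + \<sigma> * s j * zi) (\<lambda>j. 1 - \<sigma> * s j * z) n"

definition link :: "int \<Rightarrow> complex" where
  "link n = e n * switch_prod (\<lambda>j. 1 + \<sigma> * s j * zi) (\<lambda>j. 1 - \<sigma> * s j * z) n"

lemma finite_factors:
  "finite {j. 1 + \<sigma> * s j * zi \<noteq> 1}" "finite {j. 1 - \<sigma> * s j * z \<noteq> 1}"
  by (rule finite_subset[OF _ finite_s]; auto)+

lemma link_eq_mode: "link n = mode n * (1 - \<sigma> * s n * z)"
  unfolding link_def mode_def switch_prod_eq_gap_prod[OF finite_factors] by (simp only: mult_ac)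

lemma link_succ_eq_mode: "link (n + 1) = mode n * (z + \<sigma> * s n)"
proof -
  have "link (n + 1)
      = z * e n * ((1 + \<sigma> * s n * zi) * gap_prod (\<lambda>j. 1 + \<sigma> * s j * zi) (\<lambda>j. 1 - \<sigma> * s j * z) n)"
    unfolding link_def e_succ switch_prod_succ_eq_gap_prod[OF finite_factors] ..
  then show ?thesis unfolding mode_def using z_zi by algebra
qed

lemma link_upper_step: "link n + \<sigma> * s n * link (n + 1) = c n ^ 2 * mode n"
proof -
  have "link n + \<sigma> * s n * link (n + 1) = mode n * (1 + (\<sigma> * \<sigma>) * s n ^ 2)"
    unfolding link_eq_mode[of n] link_succ_eq_mode[of n] by (simp add: algebra_simps power2_eq_square)
  then show ?thesis by (simp add: sign cosh_sinh)
qed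

lemma link_lower_step: "zi * (link (n + 1) - \<sigma> * s n * link n) = c n ^ 2 * mode n"
proof -
  have "zi * (link (n + 1) - \<sigma> * s n * link n)
      = mode n * (z * zi + (\<sigma> * \<sigma>) * (z * zi) * s n ^ 2)"
    unfolding link_eq_mode[of n] link_succ_eq_mode[of n] by (simp add: algebra_simps power2_eq_square)
  then show ?thesis by (simp add: sign cosh_sinh z_zi)
qed

lemma upper_sum:
  assumes "a < M" "s M = 0"
  shows "(\<Sum>m\<in>{a<..M}. (- \<sigma>) ^ nat (m - a) * (\<Prod>j\<in>{a<..<m}. s j) * (c m ^ 2 * mode m))
    = - \<sigma> * link (a + 1)"
proof -
  define F where "F m = (- \<sigma>) ^ nat (m - a) * (\<Prod>j\<in>{a<..<m}. s j) * link m" for m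
  have "(\<Sum>m\<in>{a<..M}. (- \<sigma>) ^ nat (m - a) * (\<Prod>j\<in>{a<..<m}. s j) * (c m ^ 2 * mode m))
      = (\<Sum>m\<in>{a+1..M}. (- F (m + 1)) - (- F m))"
  proof (rule sum.cong)
    fix m assume m: "m \<in> {a+1..M}"
    then have "nat (m + 1 - a) = Suc (nat (m - a))" "{a<..<m+1} = insert m {a<..<m}" by auto
    then show "(- \<sigma>) ^ nat (m - a) * (\<Prod>j\<in>{a<..<m}. s j) * (c m ^ 2 * mode m) = - F (m + 1) - - F m"
      unfolding F_def link_upper_step[symmetric] by (simp add: algebra_simps)
  qed auto
  also have "\<dots> = F (a + 1) - F (M + 1)"
    using sum_int_telescope[of "a + 1" M "\<lambda>m. - F (m + 1)"] assms by simp
  also have "F (M + 1) = 0"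
  proof -
    have "(\<Prod>j\<in>{a<..<M+1}. s j) = 0" by (rule prod_zero) (use assms in auto)
    then show ?thesis by (simp add: F_def)
  qed
  also have "F (a + 1) = - \<sigma> * link (a + 1)"
  proof -
    have "{a<..<a+1} = {}" by auto
    then show ?thesis by (simp add: F_def)
  qed
  finally show ?thesis by simp
qed

lemma lower_sum:
  assumes "N < a" "s N = 0"
  shows "(\<Sum>n\<in>{N..<a}. \<sigma> ^ nat (a - n) * (\<Prod>j\<in>{n<..<a}. s j) * (c n ^ 2 * mode n))
    = \<sigma> * zi * link a"
proof -
  define G where "G n = \<sigma> ^ nat (a - n) * (\<Prod>j\<in>{n<..<a}. s j) * zi * link (n + 1)" for n
  have "(\<Sum>n\<in>{N..<a}. \<sigma> ^ nat (a - n) * (\<Prod>j\<in>{n<..<a}. s j) * (c n ^ 2 * mode n))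
      = (\<Sum>n\<in>{N..a-1}. G n - G (n - 1))"
  proof (rule sum.cong)
    fix n assume n: "n \<in> {N..a-1}"
    then have "nat (a - (n - 1)) = Suc (nat (a - n))" "{n-1<..<a} = insert n {n<..<a}" by auto
    then show "\<sigma> ^ nat (a - n) * (\<Prod>j\<in>{n<..<a}. s j) * (c n ^ 2 * mode n) = G n - G (n - 1)"
      unfolding G_def link_lower_step[symmetric] by (simp add: algebra_simps)
  qed auto
  also have "\<dots> = G (a - 1) - G (N - 1)"
    using sum_int_telescope[of N "a - 1" G] assms by simp
  also have "G (N - 1) = 0"
  proof -
    have "(\<Prod>j\<in>{N-1<..<a}. s j) = 0" by (rule prod_zero) (use assms in auto)
    then show ?thesis by (simp add: G_def)
  qed
  also have "G (a - 1) = \<sigma> * zi * link a"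
  proof -
    have "{a-1<..<a} = {}" by auto
    then show ?thesis by (simp add: G_def)
  qed
  finally show ?thesis by simp
qed

lemma hopping_mode_eigen:
  assumes "N < a" "a < M" "s N = 0" "s M = 0"
  shows "(\<Sum>m\<in>{a<..M}. \<sigma> ^ nat (m - a) * hopping s c m a * (c m * mode m))
       - (\<Sum>n\<in>{N..<a}. (- \<sigma>) ^ nat (a - n) * hopping s c a n * (c n * mode n))
     = - \<sigma> * (z + zi) * (c a * mode a)"
proof -
  have upper_term: "\<sigma> ^ nat (m - a) * hopping s c m a * (c m * mode m)
      = c a * ((- \<sigma>) ^ nat (m - a) * (\<Prod>j\<in>{a<..<m}. s j) * (c m ^ 2 * mode m))" for m
    by (simp only: hopping_def power_minus[of \<sigma>] power2_eq_square mult_ac)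
  have lower_term: "(- \<sigma>) ^ nat (a - n) * hopping s c a n * (c n * mode n)
      = c a * (\<sigma> ^ nat (a - n) * (\<Prod>j\<in>{n<..<a}. s j) * (c n ^ 2 * mode n))" for n
  proof -
    have "(- \<sigma>) ^ nat (a - n) * hopping s c a n * (c n * mode n)
        = ((- \<sigma>) ^ nat (a - n) * (-1) ^ nat (a - n)) * (c a * ((\<Prod>j\<in>{n<..<a}. s j) * (c n ^ 2 * mode n)))"
      by (simp only: hopping_def power2_eq_square mult_ac)
    then show ?thesis by (simp add: power_mult_distrib[symmetric] mult_ac)
  qed
  show ?thesis
    unfolding upper_term lower_term sum_distrib_left[symmetric]
      upper_sum[OF assms(2,4)] lower_sum[OF assms(1,3)] link_eq_mode[of a] link_succ_eq_mode[of a]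
    using z_zi sign by algebra
qed

end

section \<open>The commutator with the Hamiltonian\<close>

lemma obtain_points_outside:
  fixes D :: "int set"
  assumes "finite D"
  obtains M N where "a < M" "M \<notin> D" "N < a" "N \<notin> D"
proof (rule that[of "Max (insert a D) + 1" "Min (insert a D) - 1"])
  have "Min (insert a D) \<le> a" "a \<le> Max (insert a D)"
    using assms by simp_all
  then show "a < Max (insert a D) + 1" "Min (insert a D) - 1 < a"
    by simp_all
  show "Max (insert a D) + 1 \<notin> D"
  proof
    assume "Max (insert a D) + 1 \<in> D"
    then have "Max (insert a D) + 1 \<le> Max (insert a D)"
      using assms by (intro Max_ge) auto
    then show False by simp
  qed
  show "Min (insert a D) - 1 \<notin> D"
  proof
    assume "Min (insert a D) - 1 \<in> D"
    then have "Min (insert a D) \<le> Min (insert a D) - 1"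
      using assms by (intro Min_le) auto
    then show False by simp
  qed
qed

lemma minus_one_power_nat_succ:
  assumes "n < a"
  shows "(-1::'a::ring_1) ^ nat (a - n + 1) = - ((-1) ^ nat (a - n))"
proof -
  have "nat (a - n + 1) = Suc (nat (a - n))" using assms by simp
  then show ?thesis by simp
qed

lemma comm_H_term_Psi:
  assumes "\<And>k. X (PsiS k) = 0"
  shows "comm_H_term c X (Psi a) ((m, n), h) =
    (if n = a \<and> a < m \<and> h = Psi m then c m a * X (Psi m) else 0) +
    (if m = a \<and> n < a \<and> h = Psi n then - ((-1) ^ nat (a - n) * c a n * X (Psi n)) else 0)"
  by (cases h) (auto simp: comm_H_term_def comm_Hmn_gen_def comm_quad_gen_def unit_fs_def
      minus_one_power_nat_succ assms)

lemma comm_H_term_PsiS: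
  assumes "\<And>k. X (Psi k) = 0"
  shows "comm_H_term c X (PsiS a) ((m, n), h) =
    (if n = a \<and> a < m \<and> h = PsiS m then (-1) ^ nat (m - a) * c m a * X (PsiS m) else 0) +
    (if m = a \<and> n < a \<and> h = PsiS n then - (c a n * X (PsiS n)) else 0)"
  by (cases h) (auto simp: comm_H_term_def comm_Hmn_gen_def comm_quad_gen_def unit_fs_def
      minus_one_power_nat_succ assms)

lemma comm_H_term_PsiS_eq_0:
  assumes "\<And>k. X (PsiS k) = 0"
  shows "comm_H_term c X (PsiS a) t = 0"
  by (cases t; cases "snd t")
     (auto simp: comm_H_term_def comm_Hmn_gen_def comm_quad_gen_def unit_fs_def assms)

lemma comm_H_term_Psi_eq_0:
  assumes "\<And>k. X (Psi k) = 0"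
  shows "comm_H_term c X (Psi a) t = 0"
  by (cases t; cases "snd t")
     (auto simp: comm_H_term_def comm_Hmn_gen_def comm_quad_gen_def unit_fs_def assms)

lemma Sum_any_two_branches:
  fixes F :: "(int \<times> int) \<times> 'g \<Rightarrow> 'a::comm_monoid_add"
  assumes F: "\<And>m n x. F ((m, n), x) =
      (if n = a \<and> a < m \<and> x = G m then U m else 0) + (if m = a \<and> n < a \<and> x = G n then V n else 0)"
    and U: "\<And>m. M < m \<Longrightarrow> U m = 0" and V: "\<And>n. n < N \<Longrightarrow> V n = 0"
  shows "finite {t. F t \<noteq> 0}" "Sum_any F = (\<Sum>m\<in>{a<..M}. U m) + (\<Sum>n\<in>{N..<a}. V n)"
proof -
  define up where "up t = (case t of ((m, n), x) \<Rightarrow> if n = a \<and> a < m \<and> x = G m then U m else 0)" for t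
  define down where "down t = (case t of ((m, n), x) \<Rightarrow> if m = a \<and> n < a \<and> x = G n then V n else 0)" for t
  have F_split: "F t = up t + down t" for t
    by (cases t) (auto simp: F up_def down_def)
  have up_supp: "t \<in> (\<lambda>m. ((m, a), G m)) ` {a<..M}" if "up t \<noteq> 0" for t
    using that U by (cases t) (auto simp: up_def split: if_splits intro!: image_eqI leI)
  have down_supp: "t \<in> (\<lambda>n. ((a, n), G n)) ` {N..<a}" if "down t \<noteq> 0" for t
    using that V by (cases t) (auto simp: down_def split: if_splits intro!: image_eqI leI)
  have fin_up: "finite {t. up t \<noteq> 0}"
    by (rule finite_subset[OF _ finite_imageI[of "{a<..M}"]]) (use up_supp in auto)
  have fin_down: "finite {t. down t \<noteq> 0}"
    by (rule finite_subset[OF _ finite_imageI[of "{N..<a}"]]) (use down_supp in auto)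
  show "finite {t. F t \<noteq> 0}"
    by (rule finite_subset[OF _ finite_UnI[OF fin_up fin_down]]) (auto simp: F_split)
  have "Sum_any F = Sum_any up + Sum_any down"
    unfolding F_split by (rule Sum_any.distrib[OF fin_up fin_down])
  also have "Sum_any up = (\<Sum>m\<in>{a<..M}. U m)"
    by (subst Sum_any_eq_sum_image[OF _ _ up_supp]) (auto simp: inj_on_def up_def)
  also have "Sum_any down = (\<Sum>n\<in>{N..<a}. V n)"
    by (subst Sum_any_eq_sum_image[OF _ _ down_supp]) (auto simp: inj_on_def down_def)
  finally show "Sum_any F = (\<Sum>m\<in>{a<..M}. U m) + (\<Sum>n\<in>{N..<a}. V n)" .
qed

lemma comm_H_Psi:
  assumes "\<And>k. X (PsiS k) = 0" "\<And>m. M < m \<Longrightarrow> c m a = 0" "\<And>n. n < N \<Longrightarrow> c a n = 0"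
  shows "finite {t. comm_H_term c X (Psi a) t \<noteq> 0}"
    "comm_H c X (Psi a) = (\<Sum>m\<in>{a<..M}. c m a * X (Psi m))
       - (\<Sum>n\<in>{N..<a}. (-1) ^ nat (a - n) * c a n * X (Psi n))"
  using Sum_any_two_branches[OF comm_H_term_Psi[where X = X and c = c and a = a, OF assms(1)],
      where M = M and N = N] assms(2,3)
  by (simp_all add: comm_H_def sum_negf)

lemma comm_H_PsiS:
  assumes "\<And>k. X (Psi k) = 0" "\<And>m. M < m \<Longrightarrow> c m a = 0" "\<And>n. n < N \<Longrightarrow> c a n = 0"
  shows "finite {t. comm_H_term c X (PsiS a) t \<noteq> 0}"
    "comm_H c X (PsiS a) = (\<Sum>m\<in>{a<..M}. (-1) ^ nat (m - a) * c m a * X (PsiS m))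
       - (\<Sum>n\<in>{N..<a}. c a n * X (PsiS n))"
  using Sum_any_two_branches[OF comm_H_term_PsiS[where X = X and c = c and a = a, OF assms(1)],
      where M = M and N = N] assms(2,3)
  by (simp_all add: comm_H_def sum_negf)

context mode_family
begin

lemma obtain_hopping_range:
  obtains N M where "N < a" "a < M" "s N = 0" "s M = 0"
    "\<And>m. M < m \<Longrightarrow> hopping s c m a = 0" "\<And>n. n < N \<Longrightarrow> hopping s c a n = 0"
proof -
  obtain M N where "a < M" "s M = 0" "N < a" "s N = 0"
    using obtain_points_outside[OF finite_s, of a] by blast
  with that show ?thesis by (auto intro: hopping_eq_0)
qed

lemma comm_H_Psi_modes:
  assumes "\<sigma> = 1" and X: "\<And>n. X (Psi n) = c n * mode n" "\<And>k. X (PsiS k) = 0"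
  shows "comm_H_welldef (hopping s c) X \<and> comm_H (hopping s c) X = (\<lambda>g. - (z + zi) * X g)"
proof -
  have "finite {t. comm_H_term (hopping s c) X g t \<noteq> 0} \<and> comm_H (hopping s c) X g = - (z + zi) * X g" for g
  proof (cases g)
    case (PsiS a)
    then show ?thesis by (simp add: comm_H_def comm_H_term_PsiS_eq_0[where X = X, OF X(2)] X(2))
  next
    case (Psi a)
    obtain N M where gaps: "N < a" "a < M" "s N = 0" "s M = 0"
      and H: "\<And>m. M < m \<Longrightarrow> hopping s c m a = 0" "\<And>n. n < N \<Longrightarrow> hopping s c a n = 0"
      using obtain_hopping_range[of a] by blast
    note comm = comm_H_Psi[where X = X and c = "hopping s c" and a = a and M = M and N = N, OF X(2) H]
    have "comm_H (hopping s c) X (Psi a) = - (z + zi) * (c a * mode a)"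
      using comm(2) hopping_mode_eigen[OF gaps] assms by simp
    with Psi X comm(1) show ?thesis by simp
  qed
  then show ?thesis unfolding comm_H_welldef_def by auto
qed

lemma comm_H_PsiS_modes:
  assumes "\<sigma> = -1" and X: "\<And>n. X (PsiS n) = c n * mode n" "\<And>k. X (Psi k) = 0"
  shows "comm_H_welldef (hopping s c) X \<and> comm_H (hopping s c) X = (\<lambda>g. (z + zi) * X g)"
proof -
  have "finite {t. comm_H_term (hopping s c) X g t \<noteq> 0} \<and> comm_H (hopping s c) X g = (z + zi) * X g" for g
  proof (cases g)
    case (Psi a)
    then show ?thesis by (simp add: comm_H_def comm_H_term_Psi_eq_0[where X = X, OF X(2)] X(2))
  next
    case (PsiS a)
    obtain N M where gaps: "N < a" "a < M" "s N = 0" "s M = 0"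
      and H: "\<And>m. M < m \<Longrightarrow> hopping s c m a = 0" "\<And>n. n < N \<Longrightarrow> hopping s c a n = 0"
      using obtain_hopping_range[of a] by blast
    note comm = comm_H_PsiS[where X = X and c = "hopping s c" and a = a and M = M and N = N, OF X(2) H]
    have "comm_H (hopping s c) X (PsiS a) = (z + zi) * (c a * mode a)"
      using comm(2) hopping_mode_eigen[OF gaps] assms by simp
    with PsiS X comm(1) show ?thesis by simp
  qed
  then show ?thesis unfolding comm_H_welldef_def by auto
qed

end

lemma phi_Psi_gap_prod:
  assumes "finite {j. \<gamma> j \<noteq> 0}"
  shows "phi \<gamma> \<theta> (Psi n) = of_real (cosh (\<gamma> n)) * cis (of_int n * \<theta>) *
    gap_prod (\<lambda>j. 1 + of_real (sinh (\<gamma> j)) * cis (- \<theta>)) (\<lambda>j. 1 - of_real (sinh (\<gamma> j)) * cis \<theta>) n"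
proof -
  have "finite {j. 1 + of_real (sinh (\<gamma> j)) * cis (- \<theta>) \<noteq> 1}" "finite {j. 1 - of_real (sinh (\<gamma> j)) * cis \<theta> \<noteq> 1}"
    by (rule finite_subset[OF _ assms]; auto)+
  note split = gap_prod_split[OF this, symmetric]
  show ?thesis
    unfolding phi_def gen.case split mult.assoc
    by (intro arg_cong2[where f = "(*)"] refl Prod_any.cong) auto
qed

lemma phis_PsiS_gap_prod:
  assumes "finite {j. \<gamma> j \<noteq> 0}"
  shows "phis \<gamma> \<theta> (PsiS n) = of_real (cosh (\<gamma> n)) * cis (- (of_int n * \<theta>)) *
    gap_prod (\<lambda>j. 1 - of_real (sinh (\<gamma> j)) * cis \<theta>) (\<lambda>j. 1 + of_real (sinh (\<gamma> j)) * cis (- \<theta>)) n"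
proof -
  have "finite {j. 1 - of_real (sinh (\<gamma> j)) * cis \<theta> \<noteq> 1}" "finite {j. 1 + of_real (sinh (\<gamma> j)) * cis (- \<theta>) \<noteq> 1}"
    by (rule finite_subset[OF _ assms]; auto)+
  note split = gap_prod_split[OF this, symmetric]
  show ?thesis
    unfolding phis_def gen.case split mult.assoc
    by (intro arg_cong2[where f = "(*)"] refl Prod_any.cong) auto
qed

lemma Hcoef_eq_hopping:
  "Hcoef \<gamma> = hopping (\<lambda>j. of_real (sinh (\<gamma> j))) (\<lambda>j. of_real (cosh (\<gamma> j)))"
  unfolding Hcoef_def hopping_def by (simp add: fun_eq_iff of_real_prod mult.assoc)

lemma mode_family_hyperbolic:
  assumes "finite {j. \<gamma> j \<noteq> 0}" "z * zi = 1" "\<And>n. e (n + 1) = z * e n" "\<sigma> * \<sigma> = 1"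
  shows "mode_family (\<lambda>j. of_real (sinh (\<gamma> j))) (\<lambda>j. of_real (cosh (\<gamma> j))) e z zi \<sigma>"
proof
  show "finite {j. complex_of_real (sinh (\<gamma> j)) \<noteq> 0}"
    by (rule finite_subset[OF _ assms(1)]) auto
  show "(complex_of_real (cosh (\<gamma> j)))\<^sup>2 = 1 + (complex_of_real (sinh (\<gamma> j)))\<^sup>2" for j
    by (metis cosh_square_eq add.commute of_real_add of_real_power of_real_1)
qed (use assms in auto)

lemma comm_H_phi:
  assumes fin: "finite {n. \<gamma> n \<noteq> 0}"
  shows "comm_H_welldef (Hcoef \<gamma>) (phi \<gamma> \<theta>) \<and>
    comm_H (Hcoef \<gamma>) (phi \<gamma> \<theta>) = (\<lambda>g. - (cis \<theta> + cis (- \<theta>)) * phi \<gamma> \<theta> g)"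
proof -
  interpret mode_family "\<lambda>j. of_real (sinh (\<gamma> j))" "\<lambda>j. of_real (cosh (\<gamma> j))"
      "\<lambda>n. cis (of_int n * \<theta>)" "cis \<theta>" "cis (- \<theta>)" 1
    by (rule mode_family_hyperbolic[OF fin]) (simp_all add: cis_mult algebra_simps)
  have "phi \<gamma> \<theta> (Psi n) = of_real (cosh (\<gamma> n)) * mode n" for n
    by (simp add: phi_Psi_gap_prod[OF fin] mode_def mult.assoc)
  then show ?thesis
    unfolding Hcoef_eq_hopping by (intro comm_H_Psi_modes) (simp_all add: phi_def)
qed

lemma comm_H_phis:
  assumes fin: "finite {n. \<gamma> n \<noteq> 0}"
  shows "comm_H_welldef (Hcoef \<gamma>) (phis \<gamma> \<theta>) \<and>
    comm_H (Hcoef \<gamma>) (phis \<gamma> \<theta>) = (\<lambda>g. (cis \<theta> + cis (- \<theta>)) * phis \<gamma> \<theta> g)"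
proof -
  interpret mode_family "\<lambda>j. of_real (sinh (\<gamma> j))" "\<lambda>j. of_real (cosh (\<gamma> j))"
      "\<lambda>n. cis (- (of_int n * \<theta>))" "cis (- \<theta>)" "cis \<theta>" "-1"
    by (rule mode_family_hyperbolic[OF fin]) (simp_all add: cis_mult algebra_simps)
  have "phis \<gamma> \<theta> (PsiS n) = of_real (cosh (\<gamma> n)) * mode n" for n
    by (simp add: phis_PsiS_gap_prod[OF fin] mode_def mult.assoc)
  then have "comm_H_welldef (Hcoef \<gamma>) (phis \<gamma> \<theta>) \<and>
      comm_H (Hcoef \<gamma>) (phis \<gamma> \<theta>) = (\<lambda>g. (cis (- \<theta>) + cis \<theta>) * phis \<gamma> \<theta> g)"
    unfolding Hcoef_eq_hopping by (intro comm_H_PsiS_modes) (simp_all add: phis_def)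
  then show ?thesis by (simp add: add.commute)
qed

section \<open>The anticommutator of the fields\<close>

definition pair_switch :: "(int \<Rightarrow> real) \<Rightarrow> real \<Rightarrow> int \<Rightarrow> real \<Rightarrow> complex" where
  "pair_switch \<gamma> \<theta> n t = cis (of_int n * t) * cis (- (of_int n * \<theta>)) *
     switch_prod
       (\<lambda>j. (1 - of_real (sinh (\<gamma> j)) * cis \<theta>) * (1 + of_real (sinh (\<gamma> j)) * cis (- t)))
       (\<lambda>j. (1 + of_real (sinh (\<gamma> j)) * cis (- \<theta>)) * (1 - of_real (sinh (\<gamma> j)) * cis t)) n"

lemma phis_phi_telescope:
  assumes fin: "finite {j. \<gamma> j \<noteq> 0}"
  shows "(1 - cis t * cis (- \<theta>)) * (phis \<gamma> \<theta> (PsiS n) * phi \<gamma> t (Psi n))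
    = pair_switch \<gamma> \<theta> n t - pair_switch \<gamma> \<theta> (n + 1) t"
proof -
  define s where "s = (\<lambda>j. complex_of_real (sinh (\<gamma> j)))"
  define c where "c = complex_of_real (cosh (\<gamma> n))"
  define U where "U = (\<lambda>j. (1 - s j * cis \<theta>) * (1 + s j * cis (- t)))"
  define V where "V = (\<lambda>j. (1 + s j * cis (- \<theta>)) * (1 - s j * cis t))"
  define E where "E = cis (of_int n * t) * cis (- (of_int n * \<theta>))"
  have fin_factors:
    "finite {j. 1 - s j * cis \<theta> \<noteq> 1}" "finite {j. 1 + s j * cis (- \<theta>) \<noteq> 1}"
    "finite {j. 1 + s j * cis (- t) \<noteq> 1}" "finite {j. 1 - s j * cis t \<noteq> 1}"
    "finite {j. U j \<noteq> 1}" "finite {j. V j \<noteq> 1}"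
    unfolding U_def V_def s_def by (rule finite_subset[OF _ fin]; auto)+
  have prod: "phis \<gamma> \<theta> (PsiS n) * phi \<gamma> t (Psi n) = c\<^sup>2 * E * gap_prod U V n"
    unfolding phis_PsiS_gap_prod[OF fin] phi_Psi_gap_prod[OF fin] E_def c_def
    using gap_prod_mult[OF fin_factors(1-4), of n, folded s_def U_def V_def]
    by (simp add: s_def power2_eq_square mult_ac)
  have switch: "pair_switch \<gamma> \<theta> n t = E * (V n * gap_prod U V n)"
    unfolding pair_switch_def E_def switch_prod_eq_gap_prod[OF fin_factors(5,6), symmetric]
    by (simp add: U_def V_def s_def)
  have switch_succ: "pair_switch \<gamma> \<theta> (n + 1) t = E * (cis t * cis (- \<theta>)) * (U n * gap_prod U V n)"
  proof -
    have "cis (of_int (n + 1) * t) * cis (- (of_int (n + 1) * \<theta>)) = E * (cis t * cis (- \<theta>))"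
      unfolding E_def by (simp add: cis_mult ring_distribs) (simp add: algebra_simps)
    then show ?thesis
      unfolding pair_switch_def switch_prod_succ_eq_gap_prod[OF fin_factors(5,6), symmetric]
      by (simp add: U_def V_def s_def)
  qed
  have factor: "(1 - cis t * cis (- \<theta>)) * c\<^sup>2 = V n - cis t * cis (- \<theta>) * U n"
  proof -
    have "c\<^sup>2 = 1 + (s n)\<^sup>2"
      unfolding c_def s_def by (metis cosh_square_eq add.commute of_real_add of_real_power of_real_1)
    moreover have "cis t * cis (- t) = 1" "cis \<theta> * cis (- \<theta>) = 1" by (simp_all add: cis_mult)
    ultimately show ?thesis unfolding U_def V_def by algebra
  qed
  show ?thesis
    unfolding prod switch switch_succ using factor by algebra
qed

lemma trig_poly_phi:
  assumes fin: "finite {j. \<gamma> j \<noteq> 0}"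
  defines "d \<equiv> int (card {j. \<gamma> j \<noteq> 0})"
  shows "trig_poly (\<lambda>t. phi \<gamma> t (Psi n)) (n - d) (n + d)"
proof -
  have "trig_poly (\<lambda>t. gap_prod (\<lambda>j. 1 + of_real (sinh (\<gamma> j)) * cis (- t))
      (\<lambda>j. 1 - of_real (sinh (\<gamma> j)) * cis t) n) (- d) d"
    unfolding gap_prod_def d_def
    by (rule trig_poly_Prod_any[OF fin])
       (auto intro!: trig_poly_if trig_poly_cis_affine trig_poly_mono[OF trig_poly_const])
  then have "trig_poly (\<lambda>t. of_real (cosh (\<gamma> n)) * (cis (of_int n * t) *
      gap_prod (\<lambda>j. 1 + of_real (sinh (\<gamma> j)) * cis (- t)) (\<lambda>j. 1 - of_real (sinh (\<gamma> j)) * cis t) n))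
      (n + - d) (n + d)"
    using trig_poly_cis[of 1 n] by (intro trig_poly_cmult trig_poly_mult) simp_all
  then show ?thesis by (simp add: phi_Psi_gap_prod[OF fin] mult.assoc)
qed

lemma trig_poly_pair_switch:
  assumes fin: "finite {j. \<gamma> j \<noteq> 0}"
  defines "d \<equiv> int (card {j. \<gamma> j \<noteq> 0})"
  shows "trig_poly (pair_switch \<gamma> \<theta> n) (n - d) (n + d)"
proof -
  have "trig_poly (\<lambda>t. switch_prod
       (\<lambda>j. (1 - of_real (sinh (\<gamma> j)) * cis \<theta>) * (1 + of_real (sinh (\<gamma> j)) * cis (- t)))
       (\<lambda>j. (1 + of_real (sinh (\<gamma> j)) * cis (- \<theta>)) * (1 - of_real (sinh (\<gamma> j)) * cis t)) n) (- d) d"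
    unfolding switch_prod_def d_def
    by (rule trig_poly_Prod_any[OF fin]) (auto intro!: trig_poly_if trig_poly_cmult trig_poly_cis_affine)
  then have "trig_poly (\<lambda>t. cis (- (of_int n * \<theta>)) * cis (of_int n * t) * switch_prod
       (\<lambda>j. (1 - of_real (sinh (\<gamma> j)) * cis \<theta>) * (1 + of_real (sinh (\<gamma> j)) * cis (- t)))
       (\<lambda>j. (1 + of_real (sinh (\<gamma> j)) * cis (- \<theta>)) * (1 - of_real (sinh (\<gamma> j)) * cis t)) n)
      (n + - d) (n + d)"
    by (intro trig_poly_mult trig_poly_cis)
  then show ?thesis
    unfolding pair_switch_def by (simp add: mult.commute)
qed

lemma pair_switch_diagonal:
  "pair_switch \<gamma> \<theta> n \<theta> =
    Prod_any (\<lambda>j. (1 + of_real (sinh (\<gamma> j)) * cis (- \<theta>)) * (1 - of_real (sinh (\<gamma> j)) * cis \<theta>))"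
proof -
  have "cis (of_int n * \<theta>) * cis (- (of_int n * \<theta>)) = 1" by (simp add: cis_mult)
  then show ?thesis
    unfolding pair_switch_def switch_prod_def by (simp, intro Prod_any.cong) (simp add: mult.commute)
qed

lemma acomm_phis_fourier_phi_eq_sum:
  assumes fin: "finite {j. \<gamma> j \<noteq> 0}"
  defines "d \<equiv> int (card {j. \<gamma> j \<noteq> 0})"
  shows "acomm_welldef (phis \<gamma> \<theta>) (\<lambda>h. fourier_coeff (\<lambda>\<theta>'. phi \<gamma> \<theta>' h) q) \<and>
    acomm_fs (phis \<gamma> \<theta>) (\<lambda>h. fourier_coeff (\<lambda>\<theta>'. phi \<gamma> \<theta>' h) q)
      = (\<Sum>n\<in>{q - d..q + d}. phis \<gamma> \<theta> (PsiS n) * fourier_coeff (\<lambda>t. phi \<gamma> t (Psi n)) q)"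
proof -
  define B where "B h = fourier_coeff (\<lambda>\<theta>'. phi \<gamma> \<theta>' h) q" for h
  define I where "I = {q - d..q + d}"
  have supp: "x \<in> (\<lambda>n. (PsiS n, Psi n)) ` I" if "acomm_term (phis \<gamma> \<theta>) B x \<noteq> 0" for x
  proof -
    obtain g h where "x = (g, h)" by fastforce
    with that obtain n where x: "x = (PsiS n, Psi n)" and "B (Psi n) \<noteq> 0"
      by (cases g; cases h)
         (auto simp: acomm_term_def phis_def B_def phi_def fourier_coeff_def split: if_splits)
    then have "q \<in> {n - d..n + d}"
      using fourier_coeff_eq_0[OF trig_poly_phi[OF fin, where n = n], of q] by (auto simp: B_def d_def)
    then have "n \<in> I" by (auto simp: I_def)
    with x show ?thesis by blast
  qed
  have "acomm_welldef (phis \<gamma> \<theta>) B"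
    unfolding acomm_welldef_def
    by (rule finite_subset[OF _ finite_imageI[of I]]) (use supp in \<open>auto simp: I_def\<close>)
  moreover have "acomm_fs (phis \<gamma> \<theta>) B = (\<Sum>n\<in>I. phis \<gamma> \<theta> (PsiS n) * B (Psi n))"
    unfolding acomm_fs_def
    by (subst Sum_any_eq_sum_image[OF _ _ supp]) (auto simp: I_def inj_on_def acomm_term_def)
  ultimately show ?thesis by (simp add: B_def[abs_def] I_def)
qed

lemma acomm_phis_phi_fourier:
  assumes fin: "finite {j. \<gamma> j \<noteq> 0}"
  shows "acomm_welldef (phis \<gamma> \<theta>) (\<lambda>h. fourier_coeff (\<lambda>\<theta>'. phi \<gamma> \<theta>' h) q) \<and>
    acomm_fs (phis \<gamma> \<theta>) (\<lambda>h. fourier_coeff (\<lambda>\<theta>'. phi \<gamma> \<theta>' h) q)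
      = Prod_any (\<lambda>j. (1 + of_real (sinh (\<gamma> j)) * cis (- \<theta>)) * (1 - of_real (sinh (\<gamma> j)) * cis \<theta>))
        * cis (- (of_int q * \<theta>))"
proof -
  define d where "d = int (card {j. \<gamma> j \<noteq> 0})"
  define F where "F t = (\<Sum>n\<in>{q - d..q + d}. phis \<gamma> \<theta> (PsiS n) * phi \<gamma> t (Psi n))" for t
  have "fourier_coeff F q
      = (\<Sum>n\<in>{q - d..q + d}. phis \<gamma> \<theta> (PsiS n) * fourier_coeff (\<lambda>t. phi \<gamma> t (Psi n)) q)"
    unfolding F_def
    by (subst fourier_coeff_sum) (auto simp: fourier_coeff_cmult
        intro!: continuous_intros trig_poly_continuous_on[OF trig_poly_phi[OF fin]])
  moreover have tele: "(1 - cis t * cis (- \<theta>)) * F t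
      = pair_switch \<gamma> \<theta> (q - d) t - pair_switch \<gamma> \<theta> (q + d + 1) t" for t
  proof -
    have "(1 - cis t * cis (- \<theta>)) * F t
        = (\<Sum>n\<in>{q - d..q + d}. pair_switch \<gamma> \<theta> n t - pair_switch \<gamma> \<theta> (n + 1) t)"
      unfolding F_def sum_distrib_left phis_phi_telescope[OF fin] ..
    also have "\<dots> = pair_switch \<gamma> \<theta> (q - d) t - pair_switch \<gamma> \<theta> (q + d + 1) t"
      using sum_int_telescope[of "q - d" "q + d" "\<lambda>n. - pair_switch \<gamma> \<theta> (n + 1) t"]
      by (simp add: d_def)
    finally show ?thesis .
  qed
  moreover have "fourier_coeff F q = cis (- (of_int q * \<theta>)) * pair_switch \<gamma> \<theta> (q - d) \<theta>"
  proof (rule fourier_coeff_resolvent[OF tele])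
    show "trig_poly F (q - 2 * d) (q + 2 * d)"
      unfolding F_def[abs_def]
      by (intro trig_poly_sum trig_poly_cmult trig_poly_mono[OF trig_poly_phi[OF fin]]) (auto simp: d_def)
    show "trig_poly (pair_switch \<gamma> \<theta> (q - d)) (q - 2 * d) q"
      by (rule trig_poly_mono[OF trig_poly_pair_switch[OF fin]]) (auto simp: d_def)
    show "trig_poly (pair_switch \<gamma> \<theta> (q + d + 1)) (q + 1) (q + 2 * d + 1)"
      by (rule trig_poly_mono[OF trig_poly_pair_switch[OF fin]]) (auto simp: d_def)
  qed (simp add: d_def)
  ultimately show ?thesis
    using acomm_phis_fourier_phi_eq_sum[OF fin, of \<theta> q] pair_switch_diagonal[of \<gamma> \<theta>]
    by (simp add: d_def mult.commute)
qed

theorem propositionF2: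
  fixes \<gamma> :: "int \<Rightarrow> real"
  assumes nonneg: "\<And>n. \<gamma> n \<ge> 0"
    and fin: "finite {n. \<gamma> n \<noteq> 0}"
    and Sless: "\<And>n. sinh (\<gamma> n) < 1"
  shows "(\<forall>\<theta>. comm_H_welldef (Hcoef \<gamma>) (phi \<gamma> \<theta>) \<and>
            comm_H (Hcoef \<gamma>) (phi \<gamma> \<theta>) = (\<lambda>g. - (cis \<theta> + cis (- \<theta>)) * phi \<gamma> \<theta> g))
    \<and> (\<forall>\<theta>. comm_H_welldef (Hcoef \<gamma>) (phis \<gamma> \<theta>) \<and>
            comm_H (Hcoef \<gamma>) (phis \<gamma> \<theta>) = (\<lambda>g. (cis \<theta> + cis (- \<theta>)) * phis \<gamma> \<theta> g))
    \<and> (\<forall>\<theta>\<^sub>1 (q::int).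
           acomm_welldef (phis \<gamma> \<theta>\<^sub>1) (\<lambda>h. fourier_coeff (\<lambda>\<theta>\<^sub>2. phi \<gamma> \<theta>\<^sub>2 h) q) \<and>
           acomm_fs (phis \<gamma> \<theta>\<^sub>1) (\<lambda>h. fourier_coeff (\<lambda>\<theta>\<^sub>2. phi \<gamma> \<theta>\<^sub>2 h) q)
             = Prod_any (\<lambda>j. (1 + complex_of_real (sinh (\<gamma> j)) * cis (- \<theta>\<^sub>1))
                             * (1 - complex_of_real (sinh (\<gamma> j)) * cis \<theta>\<^sub>1))
               * cis (- (of_int q * \<theta>\<^sub>1)))"
  using comm_H_phi[OF fin] comm_H_phis[OF fin] acomm_phis_phi_fourier[OF fin] by blast

end
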